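(* Let $m\ge3$, $C$ a set of $m$ candidates, $T$ the set of all $m!$ strict rankings of $C$, $w=(w_1,\dots,w_m)$ with $1=w_1\ge\cdots\ge w_m=0$, and $\sigma_t(\alpha)=w_i$ where $i$ is the position of $\alpha$ in $t\in T$. Let $(N_t)_{t\in T}$ be nonnegative integers (numbers of voters of each type) and $|\alpha|=\sum_tN_t\sigma_t(\alpha)$. Suppose candidate $a$ satisfies $|a|>|\alpha|$ for all $\alpha\ne a$, and let $b$ be a candidate with the second-highest score, i.e. $|b|\ge|\alpha|$ for all $\alpha\ne a$. For $\beta\ne a$ let $Q_3(\beta)$ be the optimal value (or $+\infty$ if infeasible) of the linear program: minimize $\sum_{t\in\bar T_{\beta a}}x_t$ over real $x_t$ ($t\in\bar T_{\beta a}$), $y_t$ ($t\in T_\beta$) subject to $$\sum_{t\in T_\beta}y_t(1-\sigma_t(\alpha))-\sum_{t\in\bar T_{\beta a}}x_t(\sigma_t(\beta)-\sigma_t(\alpha))\ge|\alpha|-|\beta|\quad\forall\alpha\ne\beta,$$ $\sum_{t\in T_\beta}y_t=\sum_{t\in\bar T_{\beta a}}x_t$, $x_t\ge0$, $y_t\ge0$, where $\bar T_{\beta a}$ is the set of types ranking $\beta$ above $a$ and $T_\beta$ the set of types ranking $\beta$ first. Then $\min_{\beta\ne a}Q_3(\beta)=Q_3(b)$. *)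

theory Defs
  imports "HOL-Analysis.Analysis" "HOL-Library.Extended_Real"
begin

text \<open>Candidates form a finite type 'c with m = CARD('c). A strict ranking t
is encoded by its position function: t c is the position (1 = top) of c.\<close>

definition rankings :: "('c::finite \<Rightarrow> nat) set" where
  "rankings = {t. bij_betw t UNIV {1..CARD('c)}}"

definition sigma :: "(nat \<Rightarrow> real) \<Rightarrow> ('c::finite \<Rightarrow> nat) \<Rightarrow> 'c \<Rightarrow> real" where
  "sigma w t \<alpha> = w (t \<alpha>)"

definition score :: "(nat \<Rightarrow> real) \<Rightarrow> (('c::finite \<Rightarrow> nat) \<Rightarrow> nat) \<Rightarrow> 'c \<Rightarrow> real" where
  "score w N \<alpha> = (\<Sum>t\<in>rankings. real (N t) * sigma w t \<alpha>)"

definition above :: "'c::finite \<Rightarrow> 'c \<Rightarrow> ('c \<Rightarrow> nat) set" where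
  "above \<beta> a = {t\<in>rankings. t \<beta> < t a}"

definition first :: "'c::finite \<Rightarrow> ('c \<Rightarrow> nat) set" where
  "first \<beta> = {t\<in>rankings. t \<beta> = 1}"

definition Q3 :: "(nat \<Rightarrow> real) \<Rightarrow> (('c::finite \<Rightarrow> nat) \<Rightarrow> nat) \<Rightarrow> 'c \<Rightarrow> 'c \<Rightarrow> ereal" where
  "Q3 w N a \<beta> = Inf {ereal (\<Sum>t\<in>above \<beta> a. x t) | x y.
      (\<forall>\<alpha>. \<alpha> \<noteq> \<beta> \<longrightarrow>
         (\<Sum>t\<in>first \<beta>. y t * (1 - sigma w t \<alpha>))
         - (\<Sum>t\<in>above \<beta> a. x t * (sigma w t \<beta> - sigma w t \<alpha>))
         \<ge> score w N \<alpha> - score w N \<beta>)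
    \<and> (\<Sum>t\<in>first \<beta>. y t) = (\<Sum>t\<in>above \<beta> a. x t)
    \<and> (\<forall>t\<in>above \<beta> a. x t \<ge> 0)
    \<and> (\<forall>t\<in>first \<beta>. y t \<ge> 0)}"

end

theory Submission
  imports Defs
begin

text \<open>The linear program defining Q3 sees the candidates only through the rankings.
Relabelling the candidates by the transposition of \<beta> and b, which fixes a, therefore
carries every feasible point of the program for \<beta> to a point of the program for b with
the same objective value; it is feasible there because the right-hand sides of the
constraints can only decrease when the score of \<beta> is at most that of b.\<close>

definition Q3_feasible ::
    "(nat \<Rightarrow> real) \<Rightarrow> (('c::finite \<Rightarrow> nat) \<Rightarrow> nat) \<Rightarrow> 'c \<Rightarrow> 'c
      \<Rightarrow> (('c \<Rightarrow> nat) \<Rightarrow> real) \<Rightarrow> (('c \<Rightarrow> nat) \<Rightarrow> real) \<Rightarrow> bool" where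
  "Q3_feasible w N a \<beta> x y \<longleftrightarrow>
    (\<forall>\<alpha>. \<alpha> \<noteq> \<beta> \<longrightarrow>
       (\<Sum>t\<in>first \<beta>. y t * (1 - sigma w t \<alpha>))
       - (\<Sum>t\<in>above \<beta> a. x t * (sigma w t \<beta> - sigma w t \<alpha>))
       \<ge> score w N \<alpha> - score w N \<beta>)
    \<and> (\<Sum>t\<in>first \<beta>. y t) = (\<Sum>t\<in>above \<beta> a. x t)
    \<and> (\<forall>t\<in>above \<beta> a. x t \<ge> 0)
    \<and> (\<forall>t\<in>first \<beta>. y t \<ge> 0)"

lemma Q3_eq_Inf_feasible:
  "Q3 w N a \<beta> = Inf {ereal (\<Sum>t\<in>above \<beta> a. x t) | x y. Q3_feasible w N a \<beta> x y}"
  unfolding Q3_def Q3_feasible_def ..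

lemma rankings_comp_bij:
  fixes p :: "'c::finite \<Rightarrow> 'c"
  assumes "bij p" and "t \<in> rankings"
  shows "t \<circ> p \<in> rankings"
  using bij_betw_trans[OF assms(1)] assms(2) unfolding rankings_def by simp

lemma sigma_comp: "sigma w (t \<circ> p) \<alpha> = sigma w t (p \<alpha>)"
  by (simp add: sigma_def)

lemma bij_betw_comp_transpose_above:
  assumes "a \<noteq> \<beta>" and "a \<noteq> b"
  shows "bij_betw (\<lambda>t. t \<circ> Transposition.transpose \<beta> b) (above b a) (above \<beta> a)"
  by (rule bij_betw_byWitness[where f' = "\<lambda>t. t \<circ> Transposition.transpose \<beta> b"])
     (use assms in \<open>auto simp: above_def rankings_comp_bij comp_assoc\<close>)

lemma bij_betw_comp_transpose_first:
  "bij_betw (\<lambda>t. t \<circ> Transposition.transpose \<beta> b) (first b) (first \<beta>)"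
  by (rule bij_betw_byWitness[where f' = "\<lambda>t. t \<circ> Transposition.transpose \<beta> b"])
     (auto simp: first_def rankings_comp_bij comp_assoc)

lemma Q3_feasible_comp_transpose:
  assumes "a \<noteq> \<beta>" and "a \<noteq> b" and score_le: "score w N \<beta> \<le> score w N b"
    and feasible: "Q3_feasible w N a \<beta> x y"
  defines "\<tau> \<equiv> Transposition.transpose \<beta> b"
  shows "Q3_feasible w N a b (\<lambda>t. x (t \<circ> \<tau>)) (\<lambda>t. y (t \<circ> \<tau>))"
proof -
  have sum_above: "(\<Sum>t\<in>above b a. h (t \<circ> \<tau>)) = (\<Sum>t\<in>above \<beta> a. h t)" for h :: "_ \<Rightarrow> real"
    using sum.reindex_bij_betw[OF bij_betw_comp_transpose_above[OF assms(1,2)]]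
    unfolding \<tau>_def .
  have sum_first: "(\<Sum>t\<in>first b. h (t \<circ> \<tau>)) = (\<Sum>t\<in>first \<beta>. h t)" for h :: "_ \<Rightarrow> real"
    using sum.reindex_bij_betw[OF bij_betw_comp_transpose_first] unfolding \<tau>_def .
  have maps_above: "t \<circ> \<tau> \<in> above \<beta> a" if "t \<in> above b a" for t
    using bij_betw_apply[OF bij_betw_comp_transpose_above[OF assms(1,2)] that]
    unfolding \<tau>_def .
  have maps_first: "t \<circ> \<tau> \<in> first \<beta>" if "t \<in> first b" for t
    using bij_betw_apply[OF bij_betw_comp_transpose_first that] unfolding \<tau>_def .
  have constraint:
    "(\<Sum>t\<in>first b. y (t \<circ> \<tau>) * (1 - sigma w t \<alpha>))
       - (\<Sum>t\<in>above b a. x (t \<circ> \<tau>) * (sigma w t b - sigma w t \<alpha>))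
     \<ge> score w N \<alpha> - score w N b" if "\<alpha> \<noteq> b" for \<alpha>
  proof -
    have "\<tau> \<alpha> \<noteq> \<beta>"
      using that by (auto simp: \<tau>_def transpose_eq_iff)
    then have "(\<Sum>t\<in>first \<beta>. y t * (1 - sigma w t (\<tau> \<alpha>)))
        - (\<Sum>t\<in>above \<beta> a. x t * (sigma w t \<beta> - sigma w t (\<tau> \<alpha>)))
      \<ge> score w N (\<tau> \<alpha>) - score w N \<beta>"
      using feasible unfolding Q3_feasible_def by blast
    moreover have "score w N (\<tau> \<alpha>) - score w N \<beta> \<ge> score w N \<alpha> - score w N b"
      using that score_le by (cases "\<alpha> = \<beta>") (auto simp: \<tau>_def)
    moreover have "(\<Sum>t\<in>first b. y (t \<circ> \<tau>) * (1 - sigma w t \<alpha>))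
        = (\<Sum>t\<in>first \<beta>. y t * (1 - sigma w t (\<tau> \<alpha>)))"
      using sum_first[of "\<lambda>t. y t * (1 - sigma w t (\<tau> \<alpha>))"]
      by (simp add: sigma_comp \<tau>_def)
    moreover have "(\<Sum>t\<in>above b a. x (t \<circ> \<tau>) * (sigma w t b - sigma w t \<alpha>))
        = (\<Sum>t\<in>above \<beta> a. x t * (sigma w t \<beta> - sigma w t (\<tau> \<alpha>)))"
      using sum_above[of "\<lambda>t. x t * (sigma w t \<beta> - sigma w t (\<tau> \<alpha>))"]
      by (simp add: sigma_comp \<tau>_def)
    ultimately show ?thesis
      by linarith
  qed
  have "(\<Sum>t\<in>first \<beta>. y t) = (\<Sum>t\<in>above \<beta> a. x t)"
    using feasible unfolding Q3_feasible_def by blast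
  then have "(\<Sum>t\<in>first b. y (t \<circ> \<tau>)) = (\<Sum>t\<in>above b a. x (t \<circ> \<tau>))"
    using sum_above[of x] sum_first[of y] by linarith
  moreover have "\<forall>t\<in>above b a. x (t \<circ> \<tau>) \<ge> 0"
    using feasible maps_above unfolding Q3_feasible_def by blast
  moreover have "\<forall>t\<in>first b. y (t \<circ> \<tau>) \<ge> 0"
    using feasible maps_first unfolding Q3_feasible_def by blast
  ultimately show ?thesis
    using constraint unfolding Q3_feasible_def by blast
qed

lemma Q3_le_if_score_le:
  assumes "a \<noteq> \<beta>" and "a \<noteq> b" and "score w N \<beta> \<le> score w N b"
  shows "Q3 w N a b \<le> Q3 w N a \<beta>"
  unfolding Q3_eq_Inf_feasible
proof (rule Inf_superset_mono, safe)
  fix x y assume feasible: "Q3_feasible w N a \<beta> x y"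
  let ?\<tau> = "Transposition.transpose \<beta> b"
  have "ereal (\<Sum>t\<in>above \<beta> a. x t) = ereal (\<Sum>t\<in>above b a. x (t \<circ> ?\<tau>))"
    using sum.reindex_bij_betw[OF bij_betw_comp_transpose_above[OF assms(1,2)], of x] by simp
  with Q3_feasible_comp_transpose[OF assms feasible]
  show "\<exists>x' y'. ereal (\<Sum>t\<in>above \<beta> a. x t) = ereal (\<Sum>t\<in>above b a. x' t)
      \<and> Q3_feasible w N a b x' y'"
    by blast
qed

theorem proposition7:
  fixes w :: "nat \<Rightarrow> real" and N :: "('c::finite \<Rightarrow> nat) \<Rightarrow> nat" and a b :: 'c
  assumes "CARD('c) \<ge> 3"
    and "w 1 = 1" and "w (CARD('c)) = 0"
    and "\<And>i j. 1 \<le> i \<Longrightarrow> i \<le> j \<Longrightarrow> j \<le> CARD('c) \<Longrightarrow> w j \<le> w i"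
    and "\<And>\<alpha>. \<alpha> \<noteq> a \<Longrightarrow> score w N a > score w N \<alpha>"
    and "b \<noteq> a"
    and "\<And>\<alpha>. \<alpha> \<noteq> a \<Longrightarrow> score w N b \<ge> score w N \<alpha>"
  shows "(INF \<beta>\<in>{\<beta>. \<beta> \<noteq> a}. Q3 w N a \<beta>) = Q3 w N a b"
proof (rule antisym)
  show "(INF \<beta>\<in>{\<beta>. \<beta> \<noteq> a}. Q3 w N a \<beta>) \<le> Q3 w N a b"
    using \<open>b \<noteq> a\<close> by (intro INF_lower) simp
  show "Q3 w N a b \<le> (INF \<beta>\<in>{\<beta>. \<beta> \<noteq> a}. Q3 w N a \<beta>)"
    using assms(6,7) by (intro INF_greatest Q3_le_if_score_le) auto
qed

end
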